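(* Let $X$ be a real Hilbert space and let $U,V,W$ be closed linear subspaces of $X$, with $Z := U\cap V\cap W$. Define the linear operator $M\colon X\times X\to X\times X\times X$ by \[ M(x,y) = \Big(P_Ux,\; P_VP_Ux+P_Vy,\; P_WP_Ux + P_WP_VP_Ux-P_Wx +P_WP_Vy-P_Wy\Big), \] and, writing $Q_i\colon X^3\to X$ for the projection onto the $i$-th coordinate, define the Ryu operator $T\colon X^2\to X^2$ by \[ T(z) = z + \big((Q_3-Q_1)Mz,\,(Q_3-Q_2)Mz\big). \] Let $0<\lambda<1$ and $(x_0,y_0)\in X\times X$, and generate $(x_k,y_k)_{k\in\mathbb N}$ via $(x_{k+1},y_{k+1}) = (1-\lambda)(x_k,y_k)+\lambda T(x_k,y_k)$. Then \[ M(x_k,y_k)\to \big(P_Z(x_0),P_Z(x_0),P_Z(x_0)\big) \] (in norm); in particular $P_U(x_k)\to P_Z(x_0)$.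
   Context: $P_S$ denotes the orthogonal projection onto a closed linear subspace $S$. The operator $M$ is the specialization of Ryu's splitting map $(x,y)\mapsto (J_A x, J_B(J_Ax+y), J_C(J_Ax - x + J_B(J_Ax+y)-y))$ to $A=N_U$, $B=N_V$, $C=N_W$ (normal cone operators), whose resolvents are $P_U,P_V,P_W$. *)

theory Defs
  imports "HOL-Analysis.Analysis"
begin

definition orth_proj :: "'a::{real_inner,complete_space} set \<Rightarrow> 'a \<Rightarrow> 'a" where
  "orth_proj S x = (THE p. p \<in> S \<and> (\<forall>s\<in>S. inner (x - p) s = 0))"

text \<open>Ryu's splitting map specialised to normal cones of U, V, W.\<close>
definition ryuM :: "'a::{real_inner,complete_space} set \<Rightarrow> 'a set \<Rightarrow> 'a set \<Rightarrow> 'a \<times> 'a \<Rightarrow> 'a \<times> 'a \<times> 'a" where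
  "ryuM U V W z = (case z of (x, y) \<Rightarrow>
     (orth_proj U x,
      orth_proj V (orth_proj U x) + orth_proj V y,
      orth_proj W (orth_proj U x) + orth_proj W (orth_proj V (orth_proj U x)) - orth_proj W x
        + orth_proj W (orth_proj V y) - orth_proj W y))"

definition Q1 :: "'a \<times> 'a \<times> 'a \<Rightarrow> 'a" where "Q1 t = fst t"
definition Q2 :: "'a \<times> 'a \<times> 'a \<Rightarrow> 'a" where "Q2 t = fst (snd t)"
definition Q3 :: "'a \<times> 'a \<times> 'a \<Rightarrow> 'a" where "Q3 t = snd (snd t)"

definition ryuT :: "'a::{real_inner,complete_space} set \<Rightarrow> 'a set \<Rightarrow> 'a set \<Rightarrow> 'a \<times> 'a \<Rightarrow> 'a \<times> 'a" where
  "ryuT U V W z = z + (Q3 (ryuM U V W z) - Q1 (ryuM U V W z), Q3 (ryuM U V W z) - Q2 (ryuM U V W z))"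

end

(* The relaxed Ryu operator T' = (1 - lam) I + lam T is linear, and the orthogonality relations of
   the three projections give the energy estimate
     ||T' z - z||^2 <= lam / (1 - lam) * (||z||^2 - ||T' z||^2),
   i.e. T' is averaged. For such a linear map on a Hilbert space the iterates converge to a fixed
   point: the step lengths are square summable, so the iterates vanish on the closure of the range
   of I - T', and its orthogonal complement consists of fixed points. At a fixed point M takes the
   value (a, a, a) with a in U \<inter> V \<inter> W, and as P_{U \<inter> V \<inter> W} of the first component is invariant
   along the iteration, a = P_{U \<inter> V \<inter> W} x_0. *)

theory Submission
  imports Defs
begin

lemma subspace_closure:
  fixes S :: "'a::real_normed_vector set"
  assumes "subspace S"
  shows "subspace (closure S)"
proof -
  have "(\<lambda>z. fst z + snd z) ` closure (S \<times> S) \<subseteq> closure S"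
    using assms closure_subset[of S]
    by (intro image_closure_subset) (auto intro!: continuous_intros simp: subspace_add)
  moreover have "(\<lambda>z. c *\<^sub>R z) ` closure S \<subseteq> closure S" for c
    using assms closure_subset[of S]
    by (intro image_closure_subset) (auto intro!: continuous_intros simp: subspace_scale)
  ultimately show ?thesis
    using assms closure_subset unfolding subspace_def closure_Times by (fastforce simp: image_subset_iff)
qed

lemma distance_attains_inf_convex:
  fixes S :: "'a::{real_inner,complete_space} set"
  assumes "convex S" "closed S" "S \<noteq> {}"
  shows "\<exists>x\<in>S. \<forall>y\<in>S. dist a x \<le> dist a y"
proof -
  define d where "d = infdist a S"
  have d_le: "d \<le> dist a s" if "s \<in> S" for s
    using that by (simp add: d_def infdist_le)
  have "d \<in> closure (dist a ` S)"
    unfolding d_def infdist_notempty[OF \<open>S \<noteq> {}\<close>]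
    using \<open>S \<noteq> {}\<close> by (intro closure_contains_Inf) (auto intro: bdd_belowI[of _ 0])
  then obtain g where g: "\<And>n. g n \<in> dist a ` S" and g_lim: "g \<longlonglongrightarrow> d"
    unfolding closure_sequential by blast
  have "\<forall>n. \<exists>s. s \<in> S \<and> dist a s = g n"
    using g by (metis imageE)
  then obtain f where "\<forall>n. f n \<in> S \<and> dist a (f n) = g n"
    by metis
  then have f: "\<And>n. f n \<in> S" and f_lim: "(\<lambda>n. dist a (f n)) \<longlonglongrightarrow> d"
    using g_lim by auto
  \<comment> \<open>Midpoints stay in \<open>S\<close>, so by the parallelogram law a minimising sequence is Cauchy.\<close>
  have "Cauchy f"
  proof (rule metric_CauchyI)
    fix e :: real
    assume "0 < e"
    have "(\<lambda>n. (dist a (f n))\<^sup>2) \<longlonglongrightarrow> d\<^sup>2"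
      by (intro tendsto_intros f_lim)
    then obtain N where N: "\<And>n. n \<ge> N \<Longrightarrow> (dist a (f n))\<^sup>2 < d\<^sup>2 + e\<^sup>2 / 4"
      using \<open>0 < e\<close> order_tendstoD(2)[of _ "d\<^sup>2" sequentially "d\<^sup>2 + e\<^sup>2 / 4"]
      by (auto simp: eventually_sequentially)
    have "dist (f m) (f n) < e" if "m \<ge> N" "n \<ge> N" for m n
    proof -
      define c where "c = (1/2) *\<^sub>R f m + (1/2) *\<^sub>R f n"
      have "c \<in> S"
        unfolding c_def using f \<open>convex S\<close> by (intro convexD) auto
      then have "d\<^sup>2 \<le> (dist a c)\<^sup>2"
        using d_le infdist_nonneg unfolding d_def by (intro power_mono) auto
      moreover have "(dist (f m) (f n))\<^sup>2 = 2 * (dist a (f m))\<^sup>2 + 2 * (dist a (f n))\<^sup>2 - 4 * (dist a c)\<^sup>2"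
        unfolding c_def dist_norm power2_norm_eq_inner
        by (simp add: inner_diff_left inner_diff_right inner_add_left inner_add_right inner_commute algebra_simps)
      ultimately have "(dist (f m) (f n))\<^sup>2 < e\<^sup>2"
        using N[OF \<open>m \<ge> N\<close>] N[OF \<open>n \<ge> N\<close>] by linarith
      then show ?thesis
        using \<open>0 < e\<close> by (simp add: power_less_imp_less_base)
    qed
    then show "\<exists>N. \<forall>m\<ge>N. \<forall>n\<ge>N. dist (f m) (f n) < e"
      by blast
  qed
  then obtain p where p: "f \<longlonglongrightarrow> p"
    using Cauchy_convergent convergent_def by blast
  have "p \<in> S"
    using closed_sequentially[OF \<open>closed S\<close>] f p by blast
  moreover have "dist a p = d"
    using LIMSEQ_unique[OF tendsto_dist[OF tendsto_const p] f_lim] .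
  ultimately show ?thesis
    using d_le by auto
qed

lemma orthogonal_if_closest_in_subspace:
  fixes S :: "'a::real_inner set"
  assumes "subspace S" "p \<in> S" "\<And>s. s \<in> S \<Longrightarrow> dist x p \<le> dist x s" "s \<in> S"
  shows "inner (x - p) s = 0"
proof (cases "s = 0")
  case False
  define t where "t = inner (x - p) s / (norm s)\<^sup>2"
  have "p + t *\<^sub>R s \<in> S"
    using assms by (simp add: subspace_add subspace_scale)
  then have "(norm (x - p))\<^sup>2 \<le> (norm (x - p - t *\<^sub>R s))\<^sup>2"
    using assms(3) by (simp add: dist_norm power_mono diff_diff_eq)
  also have "\<dots> = (norm (x - p))\<^sup>2 - 2 * t * inner (x - p) s + t\<^sup>2 * (norm s)\<^sup>2"
    using dot_norm_neg[of "x - p" "t *\<^sub>R s"] by (simp add: power_mult_distrib)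
  also have "\<dots> = (norm (x - p))\<^sup>2 - (inner (x - p) s)\<^sup>2 / (norm s)\<^sup>2"
    using False by (simp add: t_def power2_eq_square field_simps)
  finally have "(inner (x - p) s)\<^sup>2 / (norm s)\<^sup>2 \<le> 0"
    by simp
  then show ?thesis
    using False by (simp add: divide_le_0_iff)
qed simp

lemma orth_proj_eqI:
  fixes S :: "'a::{real_inner,complete_space} set"
  assumes "subspace S" "p \<in> S" "\<And>s. s \<in> S \<Longrightarrow> inner (x - p) s = 0"
  shows "orth_proj S x = p"
  unfolding orth_proj_def
proof (rule the_equality)
  show "p \<in> S \<and> (\<forall>s\<in>S. inner (x - p) s = 0)"
    using assms by blast
next
  fix q
  assume q: "q \<in> S \<and> (\<forall>s\<in>S. inner (x - q) s = 0)"
  then have "p - q \<in> S"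
    using assms by (simp add: subspace_diff)
  then have "inner (x - q) (p - q) = 0" "inner (x - p) (p - q) = 0"
    using q assms(3) by auto
  then have "inner ((x - q) - (x - p)) (p - q) = 0"
    by (simp only: inner_diff_left diff_self)
  then show "q = p"
    by simp
qed

lemma
  fixes S :: "'a::{real_inner,complete_space} set"
  assumes "subspace S" "closed S"
  shows orth_proj_in: "orth_proj S x \<in> S"
    and orth_proj_orthogonal: "s \<in> S \<Longrightarrow> inner (x - orth_proj S x) s = 0"
proof -
  have "S \<noteq> {}"
    using subspace_0[OF assms(1)] by blast
  then obtain p where p: "p \<in> S" "\<And>s. s \<in> S \<Longrightarrow> dist x p \<le> dist x s"
    using distance_attains_inf_convex[OF subspace_imp_convex[OF assms(1)] assms(2)] by blast
  then have orth: "\<And>s. s \<in> S \<Longrightarrow> inner (x - p) s = 0"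
    using orthogonal_if_closest_in_subspace[OF assms(1)] by blast
  then have "orth_proj S x = p"
    using orth_proj_eqI[OF assms(1) p(1)] by blast
  then show "orth_proj S x \<in> S" "s \<in> S \<Longrightarrow> inner (x - orth_proj S x) s = 0"
    using p(1) orth by auto
qed

lemma bounded_linear_orth_proj:
  fixes S :: "'a::{real_inner,complete_space} set"
  assumes "subspace S" "closed S"
  shows "bounded_linear (orth_proj S)"
proof (rule bounded_linear_intro[where K = 1])
  note in_S = orth_proj_in[OF assms] and orth = orth_proj_orthogonal[OF assms]
  fix x y :: 'a and r :: real
  show "orth_proj S (x + y) = orth_proj S x + orth_proj S y"
  proof (rule orth_proj_eqI[OF assms(1)])
    show "orth_proj S x + orth_proj S y \<in> S"
      using assms(1) in_S by (simp add: subspace_add)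
    fix s
    assume "s \<in> S"
    then show "inner (x + y - (orth_proj S x + orth_proj S y)) s = 0"
      using orth[where x = x] orth[where x = y] by (simp add: inner_diff_left inner_add_left)
  qed
  show "orth_proj S (r *\<^sub>R x) = r *\<^sub>R orth_proj S x"
  proof (rule orth_proj_eqI[OF assms(1)])
    show "r *\<^sub>R orth_proj S x \<in> S"
      using assms(1) in_S by (simp add: subspace_scale)
    fix s
    assume "s \<in> S"
    then show "inner (r *\<^sub>R x - r *\<^sub>R orth_proj S x) s = 0"
      using orth[where x = x] by (simp flip: scaleR_diff_right)
  qed
  have "orthogonal (orth_proj S x) (x - orth_proj S x)"
    using orth[OF in_S] by (simp add: orthogonal_def inner_commute)
  from norm_add_Pythagorean[OF this]
  have "(norm x)\<^sup>2 = (norm (orth_proj S x))\<^sup>2 + (norm (x - orth_proj S x))\<^sup>2"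
    by simp
  then show "norm (orth_proj S x) \<le> norm x * 1"
    using power2_le_imp_le[of "norm (orth_proj S x)" "norm x"] by simp
qed

lemma orth_proj_orth_proj_subspace:
  fixes S W :: "'a::{real_inner,complete_space} set"
  assumes "subspace S" "closed S" "subspace W" "closed W" "S \<subseteq> W"
  shows "orth_proj S (orth_proj W x) = orth_proj S x"
proof (rule orth_proj_eqI[OF assms(1) orth_proj_in[OF assms(1,2)]])
  fix s
  assume "s \<in> S"
  have "inner (x - orth_proj S x) s = 0"
    using orth_proj_orthogonal[OF assms(1,2) \<open>s \<in> S\<close>] .
  moreover have "inner (x - orth_proj W x) s = 0"
    using orth_proj_orthogonal[OF assms(3,4)] assms(5) \<open>s \<in> S\<close> by blast
  ultimately show "inner (orth_proj W x - orth_proj S x) s = 0"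
    by (simp add: inner_diff_left)
qed

(* With K = \<alpha> / (1 - \<alpha>) this is the inequality defining \<alpha>-averaged linear maps. *)
locale averaged_linear =
  fixes T :: "'a::{real_inner,complete_space} \<Rightarrow> 'a" and K :: real
  assumes linear: "linear T"
    and K_pos: "0 < K"
    and averaged: "(norm (T z - z))\<^sup>2 \<le> K * ((norm z)\<^sup>2 - (norm (T z))\<^sup>2)"
begin

lemma norm_le: "norm (T z) \<le> norm z"
proof -
  have "0 \<le> K * ((norm z)\<^sup>2 - (norm (T z))\<^sup>2)"
    using averaged[of z] zero_le_power2[of "norm (T z - z)"] by linarith
  then have "(norm (T z))\<^sup>2 \<le> (norm z)\<^sup>2"
    using K_pos by (simp add: zero_le_mult_iff)
  then show ?thesis
    by (rule power2_le_imp_le) simp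
qed

lemma linear_iterate: "linear (T ^^ k)"
proof (induction k)
  case 0
  show ?case
    using bounded_linear.linear[OF bounded_linear_ident] by simp
next
  case (Suc k)
  show ?case
    using linear_compose[OF Suc.IH linear] by (simp add: o_def)
qed

lemma norm_iterate_le: "norm ((T ^^ k) z) \<le> norm z"
  by (induction k) (auto intro: order_trans[OF norm_le])

lemma iterate_step_tendsto_zero: "(\<lambda>k. (T ^^ Suc k) z - (T ^^ k) z) \<longlonglongrightarrow> 0"
proof -
  define e where "e k = (norm ((T ^^ Suc k) z - (T ^^ k) z))\<^sup>2" for k
  define n where "n k = (norm ((T ^^ k) z))\<^sup>2" for k
  have e_le: "e k \<le> K * (n k - n (Suc k))" for k
    using averaged[of "(T ^^ k) z"] by (simp add: e_def n_def)
  have "summable e"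
  proof (rule summableI_nonneg_bounded)
    show "0 \<le> e k" for k
      by (simp add: e_def)
    show "sum e {..<m} \<le> K * n 0" for m
    proof -
      have "sum e {..<m} \<le> (\<Sum>k<m. K * (n k - n (Suc k)))"
        by (intro sum_mono e_le)
      also have "\<dots> = K * (n 0 - n m)"
        by (simp only: sum_distrib_left[symmetric] sum_lessThan_telescope')
      also have "\<dots> \<le> K * n 0"
        using K_pos by (simp add: n_def)
      finally show ?thesis .
    qed
  qed
  then have "(\<lambda>k. sqrt (e k)) \<longlonglongrightarrow> sqrt 0"
    by (intro tendsto_real_sqrt summable_LIMSEQ_zero)
  then show ?thesis
    by (simp add: e_def tendsto_norm_zero_iff)
qed

lemma iterate_tendsto_zero_on_closure_range:
  assumes "r \<in> closure (range (\<lambda>v. v - T v))"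
  shows "(\<lambda>k. (T ^^ k) r) \<longlonglongrightarrow> 0"
proof (rule LIMSEQ_I)
  fix e :: real
  assume "0 < e"
  then have "\<exists>y\<in>range (\<lambda>v. v - T v). dist y r < e / 2"
    using assms half_gt_zero unfolding closure_approachable by blast
  then obtain v where v: "norm (r - (v - T v)) < e / 2"
    by (auto simp: dist_norm norm_minus_commute)
  obtain N where N: "\<And>k. k \<ge> N \<Longrightarrow> norm ((T ^^ Suc k) v - (T ^^ k) v) < e / 2"
    using LIMSEQ_D[OF iterate_step_tendsto_zero, of "e / 2" v] \<open>0 < e\<close> by auto
  have "norm ((T ^^ k) r) < e" if "k \<ge> N" for k
  proof -
    have "(T ^^ k) r = (T ^^ k) v - (T ^^ Suc k) v + (T ^^ k) (r - (v - T v))"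
      using linear_iterate[of k] by (simp add: linear_diff funpow_swap1)
    then have "norm ((T ^^ k) r) \<le> norm ((T ^^ k) v - (T ^^ Suc k) v) + norm ((T ^^ k) (r - (v - T v)))"
      using norm_triangle_ineq by simp
    also have "\<dots> \<le> norm ((T ^^ Suc k) v - (T ^^ k) v) + norm (r - (v - T v))"
      using norm_iterate_le[of k "r - (v - T v)"] by (simp add: norm_minus_commute)
    also have "\<dots> < e"
      using N[OF that] v by linarith
    finally show ?thesis .
  qed
  then show "\<exists>N. \<forall>k\<ge>N. norm ((T ^^ k) r - 0) < e"
    by auto
qed

lemma fixed_point_if_orthogonal_step:
  assumes "inner p (p - T p) = 0"
  shows "T p = p"
proof -
  have "inner (T p) p = (norm p)\<^sup>2"
    using assms by (simp add: inner_diff_right inner_commute power2_norm_eq_inner)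
  then have "(norm (T p - p))\<^sup>2 = (norm (T p))\<^sup>2 - (norm p)\<^sup>2"
    using dot_norm_neg[of "T p" p] by simp
  also have "\<dots> \<le> 0"
    using power_mono[OF norm_le norm_ge_zero, of p 2] by simp
  finally show ?thesis
    by simp
qed

lemma iterate_converges_to_fixed_point: "\<exists>p. T p = p \<and> (\<lambda>k. (T ^^ k) z) \<longlonglongrightarrow> p"
proof -
  define R where "R = closure (range (\<lambda>v. v - T v))"
  have "linear (\<lambda>v. v - T v)"
    using linear_compose_sub[OF bounded_linear.linear[OF bounded_linear_ident] linear] .
  then have R: "subspace R" "closed R"
    unfolding R_def by (auto intro: subspace_closure linear_subspace_image subspace_UNIV)
  define q where "q = orth_proj R z"
  define p where "p = z - q"
  have "p - T p \<in> R"
    unfolding R_def by (rule closure_subset[THEN subsetD], rule rangeI)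
  then have "inner p (p - T p) = 0"
    unfolding p_def q_def by (rule orth_proj_orthogonal[OF R])
  then have "T p = p"
    by (rule fixed_point_if_orthogonal_step)
  then have "(T ^^ k) p = p" for k
    by (induction k) simp_all
  then have "(T ^^ k) z = p + (T ^^ k) q" for k
    using linear_add[OF linear_iterate[of k], of p q] by (simp add: p_def)
  moreover have "(\<lambda>k. (T ^^ k) q) \<longlonglongrightarrow> 0"
    using orth_proj_in[OF R] unfolding q_def R_def by (rule iterate_tendsto_zero_on_closure_range)
  ultimately show ?thesis
    using \<open>T p = p\<close> tendsto_add[OF tendsto_const, of _ 0 sequentially p] by auto
qed

end

definition relaxed_ryuT :: "real \<Rightarrow> 'a::{real_inner,complete_space} set \<Rightarrow> 'a set \<Rightarrow> 'a set \<Rightarrow> 'a \<times> 'a \<Rightarrow> 'a \<times> 'a" where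
  "relaxed_ryuT lam U V W z = (1 - lam) *\<^sub>R z + lam *\<^sub>R ryuT U V W z"

lemma
  fixes U V W :: "'a::{real_inner,complete_space} set"
  assumes "subspace V" "closed V" "subspace W" "closed W"
    and a: "a = orth_proj U x"
    and b: "b = orth_proj V (a + y)"
    and c: "c = orth_proj W (a - x + b - y)"
  shows ryuM_Pair: "ryuM U V W (x, y) = (a, b, c)"
    and relaxed_ryuT_Pair: "relaxed_ryuT lam U V W (x, y) = (x + lam *\<^sub>R (c - a), y + lam *\<^sub>R (c - b))"
proof -
  have "linear (orth_proj V)" "linear (orth_proj W)"
    using bounded_linear_orth_proj assms(1-4) bounded_linear.linear by blast+
  then show M: "ryuM U V W (x, y) = (a, b, c)"
    by (simp add: ryuM_def a b c linear_add linear_diff algebra_simps)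
  show "relaxed_ryuT lam U V W (x, y) = (x + lam *\<^sub>R (c - a), y + lam *\<^sub>R (c - b))"
    by (simp add: relaxed_ryuT_def ryuT_def M Q1_def Q2_def Q3_def algebra_simps)
qed

lemma bounded_linear_ryuM:
  fixes U V W :: "'a::{real_inner,complete_space} set"
  assumes "subspace U" "closed U" "subspace V" "closed V" "subspace W" "closed W"
  shows "bounded_linear (ryuM U V W)"
proof -
  note PU = bounded_linear_orth_proj[OF assms(1,2)]
    and PV = bounded_linear_orth_proj[OF assms(3,4)]
    and PW = bounded_linear_orth_proj[OF assms(5,6)]
  have "ryuM U V W = (\<lambda>z. (orth_proj U (fst z),
      orth_proj V (orth_proj U (fst z)) + orth_proj V (snd z),
      orth_proj W (orth_proj U (fst z)) + orth_proj W (orth_proj V (orth_proj U (fst z)))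
        - orth_proj W (fst z) + orth_proj W (orth_proj V (snd z)) - orth_proj W (snd z)))"
    by (simp add: fun_eq_iff ryuM_def case_prod_beta)
  then show ?thesis
    by (simp only:) (intro bounded_linear_Pair bounded_linear_add bounded_linear_sub
        bounded_linear_compose[OF PU] bounded_linear_compose[OF PV] bounded_linear_compose[OF PW]
        bounded_linear_fst bounded_linear_snd)
qed

lemma bounded_linear_relaxed_ryuT:
  fixes U V W :: "'a::{real_inner,complete_space} set"
  assumes "subspace U" "closed U" "subspace V" "closed V" "subspace W" "closed W"
  shows "bounded_linear (relaxed_ryuT lam U V W)"
proof -
  note M = bounded_linear_ryuM[OF assms]
  have "relaxed_ryuT lam U V W = (\<lambda>z. z + lam *\<^sub>R
      (snd (snd (ryuM U V W z)) - fst (ryuM U V W z), snd (snd (ryuM U V W z)) - fst (snd (ryuM U V W z))))"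
    by (simp add: fun_eq_iff relaxed_ryuT_def ryuT_def Q1_def Q2_def Q3_def algebra_simps)
  then show ?thesis
    by (simp only:) (intro bounded_linear_add bounded_linear_ident
        bounded_linear_compose[OF bounded_linear_scaleR_right] bounded_linear_Pair bounded_linear_sub
        bounded_linear_compose[OF bounded_linear_fst M]
        bounded_linear_compose[OF bounded_linear_fst bounded_linear_compose[OF bounded_linear_snd M]]
        bounded_linear_compose[OF bounded_linear_snd bounded_linear_compose[OF bounded_linear_snd M]])
qed

(* The hypotheses are the orthogonality relations characterising
   a = P_U x, b = P_V (a + y) and c = P_W (a - x + b - y). *)
lemma ryu_energy_identity:
  fixes x y a b c :: "'a::real_inner" and lam :: real
  assumes "inner (x - a) a = 0" "inner (a + y - b) b = 0" "inner (a - x + b - y - c) c = 0"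
  shows "(norm x)\<^sup>2 + (norm y)\<^sup>2 - (norm (x + lam *\<^sub>R (c - a)))\<^sup>2 - (norm (y + lam *\<^sub>R (c - b)))\<^sup>2
     = lam * (norm (a - b))\<^sup>2 + lam * (1 - lam) * ((norm (c - a))\<^sup>2 + (norm (c - b))\<^sup>2)"
proof -
  have ab: "inner (a - b) (a - b) = - (2 * inner x (c - a) + 2 * inner y (c - b)
      + inner (c - a) (c - a) + inner (c - b) (c - b))"
    using assms by (simp add: inner_diff_left inner_diff_right inner_add_left inner_add_right inner_commute algebra_simps)
  have xa: "(norm (x + lam *\<^sub>R (c - a)))\<^sup>2 = (norm x)\<^sup>2 + 2 * lam * inner x (c - a) + lam\<^sup>2 * inner (c - a) (c - a)"
    and yb: "(norm (y + lam *\<^sub>R (c - b)))\<^sup>2 = (norm y)\<^sup>2 + 2 * lam * inner y (c - b) + lam\<^sup>2 * inner (c - b) (c - b)"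
    unfolding power2_norm_eq_inner
    by (simp_all add: inner_add_left inner_add_right inner_commute power2_eq_square algebra_simps)
  show ?thesis
    unfolding xa yb power2_norm_eq_inner[of "a - b"] power2_norm_eq_inner[of "c - a"]
      power2_norm_eq_inner[of "c - b"] ab
    by (simp add: algebra_simps power2_eq_square)
qed

lemma averaged_linear_relaxed_ryuT:
  fixes U V W :: "'a::{real_inner,complete_space} set"
  assumes "subspace U" "closed U" "subspace V" "closed V" "subspace W" "closed W"
    and "0 < lam" "lam < 1"
  shows "averaged_linear (relaxed_ryuT lam U V W) (lam / (1 - lam))"
proof (rule averaged_linear.intro)
  show "linear (relaxed_ryuT lam U V W)"
    using bounded_linear_relaxed_ryuT[OF assms(1-6)] by (rule bounded_linear.linear)
  show "0 < lam / (1 - lam)"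
    using assms(7,8) by simp
  fix z :: "'a \<times> 'a"
  obtain x y where z: "z = (x, y)"
    by fastforce
  define a where "a = orth_proj U x"
  define b where "b = orth_proj V (a + y)"
  define c where "c = orth_proj W (a - x + b - y)"
  have step: "relaxed_ryuT lam U V W (x, y) = (x + lam *\<^sub>R (c - a), y + lam *\<^sub>R (c - b))"
    by (rule relaxed_ryuT_Pair[OF assms(3-6) a_def b_def c_def])
  have "inner (x - a) a = 0" "inner (a + y - b) b = 0" "inner (a - x + b - y - c) c = 0"
    unfolding a_def b_def c_def using assms(1-6) by (simp_all add: orth_proj_in orth_proj_orthogonal)
  from ryu_energy_identity[OF this, of lam]
  have energy: "(norm (x, y))\<^sup>2 - (norm (relaxed_ryuT lam U V W (x, y)))\<^sup>2
      = lam * (norm (a - b))\<^sup>2 + lam * (1 - lam) * ((norm (c - a))\<^sup>2 + (norm (c - b))\<^sup>2)"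
    unfolding step norm_Pair by simp
  have "(norm (relaxed_ryuT lam U V W (x, y) - (x, y)))\<^sup>2
      = lam\<^sup>2 * ((norm (c - a))\<^sup>2 + (norm (c - b))\<^sup>2)"
    unfolding step by (simp add: norm_Pair power_mult_distrib distrib_left)
  also have "\<dots> \<le> lam / (1 - lam) * (lam * (norm (a - b))\<^sup>2) + lam\<^sup>2 * ((norm (c - a))\<^sup>2 + (norm (c - b))\<^sup>2)"
    using assms(7,8) by simp
  also have "\<dots> = lam / (1 - lam) * ((norm (x, y))\<^sup>2 - (norm (relaxed_ryuT lam U V W (x, y)))\<^sup>2)"
    unfolding energy using assms(8) by (simp add: field_simps power2_eq_square)
  finally show "(norm (relaxed_ryuT lam U V W z - z))\<^sup>2
      \<le> lam / (1 - lam) * ((norm z)\<^sup>2 - (norm (relaxed_ryuT lam U V W z))\<^sup>2)"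
    unfolding z .
qed

lemma ryuM_fixed_point:
  fixes U V W :: "'a::{real_inner,complete_space} set"
  assumes "subspace U" "closed U" "subspace V" "closed V" "subspace W" "closed W"
    and "lam \<noteq> 0" "relaxed_ryuT lam U V W z = z"
  shows "ryuM U V W z = (orth_proj (U \<inter> V \<inter> W) (fst z), orth_proj (U \<inter> V \<inter> W) (fst z),
      orth_proj (U \<inter> V \<inter> W) (fst z))"
proof -
  obtain x y where z: "z = (x, y)"
    by fastforce
  define a where "a = orth_proj U x"
  define b where "b = orth_proj V (a + y)"
  define c where "c = orth_proj W (a - x + b - y)"
  have "(x + lam *\<^sub>R (c - a), y + lam *\<^sub>R (c - b)) = (x, y)"
    using assms(8) relaxed_ryuT_Pair[OF assms(3-6) a_def b_def c_def] by (simp add: z)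
  then have "c = a" "c = b"
    using assms(7) by auto
  moreover have "a \<in> U" "b \<in> V" "c \<in> W"
    unfolding a_def b_def c_def using assms(1-6) by (simp_all add: orth_proj_in)
  ultimately have "a \<in> U \<inter> V \<inter> W"
    by simp
  moreover have "inner (x - a) s = 0" if "s \<in> U \<inter> V \<inter> W" for s
    unfolding a_def using that assms(1,2) orth_proj_orthogonal by blast
  ultimately have "orth_proj (U \<inter> V \<inter> W) x = a"
    using assms(1,3,5) by (intro orth_proj_eqI) (auto intro: subspace_inter)
  then show ?thesis
    using ryuM_Pair[OF assms(3-6) a_def b_def c_def] \<open>c = a\<close> \<open>c = b\<close> by (simp add: z)
qed

lemma orth_proj_inter_relaxed_ryuT:
  fixes U V W :: "'a::{real_inner,complete_space} set"
  assumes "subspace U" "closed U" "subspace V" "closed V" "subspace W" "closed W"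
  shows "orth_proj (U \<inter> V \<inter> W) (fst (relaxed_ryuT lam U V W z)) = orth_proj (U \<inter> V \<inter> W) (fst z)"
proof -
  define Z where "Z = U \<inter> V \<inter> W"
  have Z: "subspace Z" "closed Z"
    unfolding Z_def using assms by (auto intro: subspace_inter)
  have lin: "linear (orth_proj Z)"
    using bounded_linear_orth_proj[OF Z] by (rule bounded_linear.linear)
  obtain x y where z: "z = (x, y)"
    by fastforce
  define a where "a = orth_proj U x"
  define b where "b = orth_proj V (a + y)"
  define c where "c = orth_proj W (a - x + b - y)"
  have "Z \<subseteq> U" "Z \<subseteq> V" "Z \<subseteq> W"
    unfolding Z_def by auto
  note sub = orth_proj_orth_proj_subspace[OF Z assms(1,2) this(1)]
    orth_proj_orth_proj_subspace[OF Z assms(3,4) this(2)]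
    orth_proj_orth_proj_subspace[OF Z assms(5,6) this(3)]
  have "orth_proj Z a = orth_proj Z x"
    unfolding a_def using sub(1) .
  moreover have "orth_proj Z b = orth_proj Z x + orth_proj Z y"
    unfolding b_def using sub(2) \<open>orth_proj Z a = orth_proj Z x\<close> linear_add[OF lin] by simp
  ultimately have "orth_proj Z c = orth_proj Z a"
    unfolding c_def using sub(3) linear_add[OF lin] linear_diff[OF lin] by simp
  then have "orth_proj Z (x + lam *\<^sub>R (c - a)) = orth_proj Z x"
    using linear_add[OF lin] linear_scale[OF lin] linear_diff[OF lin] by simp
  then show ?thesis
    using relaxed_ryuT_Pair[OF assms(3-6) a_def b_def c_def] by (simp add: z Z_def)
qed

lemma relaxed_ryuT_iterates_converge:
  fixes U V W :: "'a::{real_inner,complete_space} set"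
  assumes "subspace U" "closed U" "subspace V" "closed V" "subspace W" "closed W"
    and "0 < lam" "lam < 1"
  obtains p where "(\<lambda>k. (relaxed_ryuT lam U V W ^^ k) z) \<longlonglongrightarrow> p"
    and "ryuM U V W p = (orth_proj (U \<inter> V \<inter> W) (fst z), orth_proj (U \<inter> V \<inter> W) (fst z),
      orth_proj (U \<inter> V \<inter> W) (fst z))"
proof -
  define Z where "Z = U \<inter> V \<inter> W"
  define T where "T = relaxed_ryuT lam U V W"
  have Z: "subspace Z" "closed Z"
    unfolding Z_def using assms by (auto intro: subspace_inter)
  interpret averaged_linear T "lam / (1 - lam)"
    unfolding T_def using averaged_linear_relaxed_ryuT assms by blast
  obtain p where "T p = p" and lim: "(\<lambda>k. (T ^^ k) z) \<longlonglongrightarrow> p"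
    using iterate_converges_to_fixed_point by blast
  have "orth_proj Z (fst ((T ^^ k) z)) = orth_proj Z (fst z)" for k
    by (induction k) (simp_all add: T_def Z_def orth_proj_inter_relaxed_ryuT[OF assms(1-6)])
  moreover have "(\<lambda>k. orth_proj Z (fst ((T ^^ k) z))) \<longlonglongrightarrow> orth_proj Z (fst p)"
    using bounded_linear.tendsto[OF bounded_linear_orth_proj[OF Z] tendsto_fst[OF lim]] .
  ultimately have "orth_proj Z (fst p) = orth_proj Z (fst z)"
    by (simp add: LIMSEQ_const_iff)
  then show thesis
    using that lim ryuM_fixed_point[OF assms(1-6) _ \<open>T p = p\<close>[unfolded T_def]] assms(7)
    unfolding T_def Z_def by auto
qed

theorem mainTheorem1:
  fixes U V W :: "'a::{real_inner,complete_space} set"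
    and lam :: real
    and x y :: "nat \<Rightarrow> 'a"
  assumes "subspace U" "closed U"
    and "subspace V" "closed V"
    and "subspace W" "closed W"
    and "0 < lam" "lam < 1"
    and "\<And>k. (x (Suc k), y (Suc k)) = (1 - lam) *\<^sub>R (x k, y k) + lam *\<^sub>R ryuT U V W (x k, y k)"
  shows "(\<lambda>k. ryuM U V W (x k, y k)) \<longlonglongrightarrow>
           (orth_proj (U \<inter> V \<inter> W) (x 0), orth_proj (U \<inter> V \<inter> W) (x 0), orth_proj (U \<inter> V \<inter> W) (x 0))
       \<and> (\<lambda>k. orth_proj U (x k)) \<longlonglongrightarrow> orth_proj (U \<inter> V \<inter> W) (x 0)"
proof -
  define T where "T = relaxed_ryuT lam U V W"
  have step: "(x (Suc k), y (Suc k)) = T (x k, y k)" for k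
    unfolding T_def relaxed_ryuT_def by (rule assms(9))
  have iterates: "(x k, y k) = (T ^^ k) (x 0, y 0)" for k
    by (induction k) (simp_all add: step)
  obtain p where "(\<lambda>k. (T ^^ k) (x 0, y 0)) \<longlonglongrightarrow> p"
    and fixed: "ryuM U V W p = (orth_proj (U \<inter> V \<inter> W) (x 0), orth_proj (U \<inter> V \<inter> W) (x 0),
      orth_proj (U \<inter> V \<inter> W) (x 0))"
    using relaxed_ryuT_iterates_converge[OF assms(1-8), of "(x 0, y 0)"] unfolding T_def by auto
  then have "(\<lambda>k. (x k, y k)) \<longlonglongrightarrow> p"
    by (simp flip: iterates)
  from bounded_linear.tendsto[OF bounded_linear_ryuM[OF assms(1-6)] this]
  have M: "(\<lambda>k. ryuM U V W (x k, y k)) \<longlonglongrightarrow>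
      (orth_proj (U \<inter> V \<inter> W) (x 0), orth_proj (U \<inter> V \<inter> W) (x 0), orth_proj (U \<inter> V \<inter> W) (x 0))"
    unfolding fixed .
  moreover have "(\<lambda>k. orth_proj U (x k)) \<longlonglongrightarrow> orth_proj (U \<inter> V \<inter> W) (x 0)"
    using tendsto_fst[OF M] by (simp add: ryuM_def)
  ultimately show ?thesis
    by blast
qed

end
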